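(* Let $\alpha$ and $\gamma$ be compositions such that $\bm\lambda(\alpha)=\bm\lambda(\gamma)$ and $\alpha\ne\gamma$. Then $K_{\alpha,\gamma}=0$, i.e., there is no composition tableau of shape $\alpha$ and content $\gamma$.
   Context: A composition is a finite sequence of positive integers; $\bm\lambda(\alpha)$ denotes the partition obtained by sorting the parts of $\alpha$ in weakly decreasing order. The diagram of a composition $\alpha=(\alpha_1,\dots,\alpha_\ell)$ has $\alpha_i$ cells in row $i$ (rows numbered from the top, cells $(i,j)$ in matrix notation). A composition tableau of shape $\alpha$ is a filling $T$ of the cells with positive integers such that: (CT1) entries weakly decrease left to right along each row; (CT2) entries of the leftmost column strictly increase from top to bottom; (CT3, triple rule) for any two cells $(i,k)$, $(j,k)$ of the diagram with $i<j$: if $\alpha_i\ge\alpha_j$ (and $k\ge2$) then $T(j,k)<T(i,k)$ or $T(i,k-1)<T(j,k)$; if $\alpha_i<\alpha_j$ then $T(j,k)<T(i,k)$ or $T(i,k)<T(j,k+1)$. A tableau has content $\gamma=(\gamma_1,\dots,\gamma_m)$ if for each $1\le i\le m$ the value $i$ occurs exactly $\gamma_i$ times and no other values occur. $K_{\alpha,\gamma}$ is the number of composition tableaux of shape $\alpha$ and content $\gamma$. *)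

theory Defs
  imports Main
begin

definition is_composition :: "nat list \<Rightarrow> bool" where
  "is_composition \<alpha> \<longleftrightarrow> (\<forall>a\<in>set \<alpha>. 0 < a)"

definition comp_partition :: "nat list \<Rightarrow> nat list" where
  "comp_partition \<alpha> = rev (sort \<alpha>)"

(* row lengths, rows numbered from 1 *)
definition row_len :: "nat list \<Rightarrow> nat \<Rightarrow> nat" where
  "row_len \<alpha> i = \<alpha> ! (i - 1)"

definition diagram :: "nat list \<Rightarrow> (nat \<times> nat) set" where
  "diagram \<alpha> = {(i, j). 1 \<le> i \<and> i \<le> length \<alpha> \<and> 1 \<le> j \<and> j \<le> row_len \<alpha> i}"

(* A composition tableau of shape alpha: filling T of the cells with positive
   integers; T is taken to be 0 outside the diagram (normalisation). *)
definition composition_tableau :: "nat list \<Rightarrow> (nat \<Rightarrow> nat \<Rightarrow> nat) \<Rightarrow> bool" where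
  "composition_tableau \<alpha> T \<longleftrightarrow>
     (\<forall>i j. (i, j) \<notin> diagram \<alpha> \<longrightarrow> T i j = 0) \<and>
     (\<forall>(i, j)\<in>diagram \<alpha>. 0 < T i j) \<and>
     \<comment> \<open>CT1: weakly decreasing along rows\<close>
     (\<forall>i j. (i, j) \<in> diagram \<alpha> \<and> (i, Suc j) \<in> diagram \<alpha> \<longrightarrow> T i (Suc j) \<le> T i j) \<and>
     \<comment> \<open>CT2: first column strictly increasing top to bottom\<close>
     (\<forall>i. 1 \<le> i \<and> Suc i \<le> length \<alpha> \<longrightarrow> T i 1 < T (Suc i) 1) \<and>
     \<comment> \<open>CT3: triple rule\<close>
     (\<forall>i j k. (i, k) \<in> diagram \<alpha> \<and> (j, k) \<in> diagram \<alpha> \<and> i < j \<longrightarrow>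
        (row_len \<alpha> i \<ge> row_len \<alpha> j \<and> 2 \<le> k \<longrightarrow> T j k < T i k \<or> T i (k - 1) < T j k) \<and>
        (row_len \<alpha> i < row_len \<alpha> j \<longrightarrow> T j k < T i k \<or> T i k < T j (Suc k)))"

definition has_content :: "nat list \<Rightarrow> nat list \<Rightarrow> (nat \<Rightarrow> nat \<Rightarrow> nat) \<Rightarrow> bool" where
  "has_content \<alpha> \<gamma> T \<longleftrightarrow>
     (\<forall>(i, j)\<in>diagram \<alpha>. 1 \<le> T i j \<and> T i j \<le> length \<gamma>) \<and>
     (\<forall>v. 1 \<le> v \<and> v \<le> length \<gamma> \<longrightarrow>
        card {c \<in> diagram \<alpha>. T (fst c) (snd c) = v} = \<gamma> ! (v - 1))"

definition K_num :: "nat list \<Rightarrow> nat list \<Rightarrow> nat" where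
  "K_num \<alpha> \<gamma> = card {T. composition_tableau \<alpha> T \<and> has_content \<alpha> \<gamma> T}"

end

theory Submission
  imports Defs "HOL-Library.Multiset"
begin

text \<open>
  A tableau of shape \<open>\<alpha>\<close> whose content \<open>\<gamma>\<close> has the same parts is forced to be the
  superstandard filling \<open>T(i,j) = i\<close>, whose content is \<open>\<alpha>\<close> itself. The first column
  increases strictly inside \<open>1..\<ell>\<close>, so \<open>T(i,1) = i\<close>, and the triple rule makes every
  column injective. Cells carrying a value \<open>v\<close> with \<open>\<gamma>\<^sub>v \<ge> c\<close> are exactly as many as
  cells in rows \<open>i\<close> with \<open>\<alpha>\<^sub>i \<ge> c\<close>, and column by column there are at most as many of
  the former; hence column \<open>c\<close> consists of such values only, so it is filled by
  \<open>{v. \<gamma>\<^sub>v \<ge> c}\<close>. Induction over columns and rows, using the triple rule once more,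
  then yields \<open>T(i,j) = i\<close>.
\<close>

lemma strict_mono_on_self_map_eq:
  fixes f :: "nat \<Rightarrow> nat"
  assumes mono: "strict_mono_on {1..n} f" and maps: "f ` {1..n} \<subseteq> {1..n}" and i: "i \<in> {1..n}"
  shows "f i = i"
proof -
  have inj: "inj_on f A" if "A \<subseteq> {1..n}" for A
    using strict_mono_on_imp_inj_on[OF mono] that by (rule inj_on_subset)
  have "card {1..i} \<le> card {1..f i}"
    using i maps strict_mono_on_leD[OF mono]
    by (intro card_inj_on_le[OF inj]) (auto simp: image_subset_iff)
  moreover have "card {i..n} \<le> card {f i..n}"
    using i maps strict_mono_on_leD[OF mono]
    by (intro card_inj_on_le[OF inj]) (auto simp: image_subset_iff)
  moreover have "f i \<in> {1..n}" using i maps by blast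
  ultimately show ?thesis using i by (simp only: card_atLeastAtMost atLeastAtMost_iff) linarith
qed

lemma card_fibres_eq_if_card_eq:
  assumes "finite A" "finite B" "card A = card B"
    and le: "\<And>y. card {x\<in>A. g x = y} \<le> card {x\<in>B. g x = y}"
  shows "card {x\<in>A. g x = y} = card {x\<in>B. g x = y}"
proof (cases "y \<in> g ` (A \<union> B)")
  case True
  let ?Y = "g ` (A \<union> B)"
  have "finite ?Y" using assms by simp
  have "card S = (\<Sum>y\<in>?Y. card {x\<in>S. g x = y})" if "S \<subseteq> A \<union> B" "finite S" for S
    using sum.group[OF \<open>finite S\<close> \<open>finite ?Y\<close>, of g "\<lambda>_. 1::nat"] that by (simp add: image_mono)
  then have "card A = (\<Sum>y\<in>?Y. card {x\<in>A. g x = y})" "card B = (\<Sum>y\<in>?Y. card {x\<in>B. g x = y})"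
    using assms(1,2) by blast+
  with assms(3) have "(\<Sum>y\<in>?Y. card {x\<in>A. g x = y}) = (\<Sum>y\<in>?Y. card {x\<in>B. g x = y})"
    by simp
  then show ?thesis using le True \<open>finite ?Y\<close> by (rule sum_mono_inv)
next
  case False
  then have "{x\<in>A. g x = y} = {}" "{x\<in>B. g x = y} = {}" by blast+
  then show ?thesis by (simp only: card.empty)
qed

text \<open>Applied to the content \<open>\<gamma>\<close>, \<open>long_rows \<gamma> c\<close> is the set of values \<open>v\<close> with \<open>\<gamma>\<^sub>v \<ge> c\<close>.\<close>

definition long_rows :: "nat list \<Rightarrow> nat \<Rightarrow> nat set" where
  "long_rows \<alpha> c = {i \<in> {1..length \<alpha>}. c \<le> row_len \<alpha> i}"

lemma sum_long_rows_eq_if_mset_eq: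
  assumes "mset \<alpha> = mset \<gamma>"
  shows "(\<Sum>i\<in>long_rows \<alpha> c. f (row_len \<alpha> i)) = (\<Sum>i\<in>long_rows \<gamma> c. f (row_len \<gamma> i))"
proof -
  have sum_as_mset: "(\<Sum>i\<in>long_rows xs c. f (row_len xs i))
      = sum_mset (image_mset (\<lambda>a. if c \<le> a then f a else 0) (mset xs))" for xs :: "nat list"
  proof -
    have "(\<Sum>i\<in>long_rows xs c. f (row_len xs i))
        = (\<Sum>i\<in>{1..length xs}. if c \<le> xs ! (i - 1) then f (xs ! (i - 1)) else 0)"
      unfolding long_rows_def row_len_def by (rule sum.inter_filter) simp
    also have "\<dots> = (\<Sum>i<length xs. if c \<le> xs ! i then f (xs ! i) else 0)"
      unfolding image_Suc_lessThan[symmetric] by (simp add: sum.reindex cong: if_cong)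
    also have "\<dots> = sum_list (map (\<lambda>a. if c \<le> a then f a else 0) xs)"
      by (simp add: sum_list_sum_nth atLeast0LessThan)
    also have "\<dots> = sum_mset (image_mset (\<lambda>a. if c \<le> a then f a else 0) (mset xs))"
      by (simp only: mset_map[symmetric] sum_mset_sum_list)
    finally show ?thesis .
  qed
  show ?thesis by (simp only: sum_as_mset assms)
qed

lemma card_long_rows_eq_if_mset_eq:
  "mset \<alpha> = mset \<gamma> \<Longrightarrow> card (long_rows \<alpha> c) = card (long_rows \<gamma> c)"
  unfolding card_eq_sum by (rule sum_long_rows_eq_if_mset_eq[where f = "\<lambda>_. 1"])

lemma diagram_eq_Sigma: "diagram \<alpha> = (SIGMA i:{1..length \<alpha>}. {1..row_len \<alpha> i})"
  by (auto simp: diagram_def)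

lemma finite_diagram: "finite (diagram \<alpha>)"
  by (simp add: diagram_eq_Sigma)

lemma card_diagram_rows:
  "R \<subseteq> {1..length \<alpha>} \<Longrightarrow> card {x \<in> diagram \<alpha>. fst x \<in> R} = (\<Sum>i\<in>R. row_len \<alpha> i)"
proof -
  assume "R \<subseteq> {1..length \<alpha>}"
  then have "{x \<in> diagram \<alpha>. fst x \<in> R} = (SIGMA i:R. {1..row_len \<alpha> i})"
    by (auto simp: diagram_def)
  then show ?thesis by (simp add: card_SigmaI finite_subset[OF \<open>R \<subseteq> _\<close>])
qed

lemma mem_long_rows_iff: "1 \<le> c \<Longrightarrow> i \<in> long_rows \<alpha> c \<longleftrightarrow> (i, c) \<in> diagram \<alpha>"
  by (auto simp: diagram_def long_rows_def)

locale comp_tableau =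
  fixes \<alpha> :: "nat list" and T :: "nat \<Rightarrow> nat \<Rightarrow> nat"
  assumes tableau: "composition_tableau \<alpha> T"
begin

lemma tableau_conditions:
  "\<forall>i j. (i, j) \<notin> diagram \<alpha> \<longrightarrow> T i j = 0"
  "\<forall>i j. (i, j) \<in> diagram \<alpha> \<and> (i, Suc j) \<in> diagram \<alpha> \<longrightarrow> T i (Suc j) \<le> T i j"
  "\<forall>i. 1 \<le> i \<and> Suc i \<le> length \<alpha> \<longrightarrow> T i 1 < T (Suc i) 1"
  "\<forall>i j k. (i, k) \<in> diagram \<alpha> \<and> (j, k) \<in> diagram \<alpha> \<and> i < j \<longrightarrow>
     (row_len \<alpha> i \<ge> row_len \<alpha> j \<and> 2 \<le> k \<longrightarrow> T j k < T i k \<or> T i (k - 1) < T j k) \<and>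
     (row_len \<alpha> i < row_len \<alpha> j \<longrightarrow> T j k < T i k \<or> T i k < T j (Suc k))"
  using tableau unfolding composition_tableau_def by simp_all

lemma zero_outside: "(i, j) \<notin> diagram \<alpha> \<Longrightarrow> T i j = 0"
  using tableau_conditions(1) by simp

lemma row_Suc_le: "(i, j) \<in> diagram \<alpha> \<Longrightarrow> T i (Suc j) \<le> T i j"
  using tableau_conditions(2) zero_outside[of i "Suc j"]
  by (cases "(i, Suc j) \<in> diagram \<alpha>") simp_all

lemma first_column_Suc_less: "1 \<le> i \<Longrightarrow> Suc i \<le> length \<alpha> \<Longrightarrow> T i 1 < T (Suc i) 1"
  using tableau_conditions(3) by simp

lemma triple_rule_le:
  "(i, k) \<in> diagram \<alpha> \<Longrightarrow> (j, k) \<in> diagram \<alpha> \<Longrightarrow> i < j \<Longrightarrow>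
   row_len \<alpha> j \<le> row_len \<alpha> i \<Longrightarrow> 2 \<le> k \<Longrightarrow> T j k < T i k \<or> T i (k - 1) < T j k"
  using tableau_conditions(4)[rule_format, of i k j] by simp

lemma triple_rule_less:
  "(i, k) \<in> diagram \<alpha> \<Longrightarrow> (j, k) \<in> diagram \<alpha> \<Longrightarrow> i < j \<Longrightarrow>
   row_len \<alpha> i < row_len \<alpha> j \<Longrightarrow> T j k < T i k \<or> T i k < T j (Suc k)"
  using tableau_conditions(4)[rule_format, of i k j] by simp

lemma strict_mono_on_first_column: "strict_mono_on {1..length \<alpha>} (\<lambda>i. T i 1)"
proof (rule strict_mono_onI)
  fix i j assume i: "i \<in> {1..length \<alpha>}" and j: "j \<in> {1..length \<alpha>}" and "i < j"
  then have "Suc i \<le> j" by simp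
  then show "T i 1 < T j 1"
  proof (induction j rule: dec_induct)
    case base
    show ?case using first_column_Suc_less i j \<open>i < j\<close> by simp
  next
    case (step n)
    then have "T n 1 < T (Suc n) 1" using first_column_Suc_less i j by simp
    with step.IH show ?case by simp
  qed
qed

lemma row_le_first: "(i, j) \<in> diagram \<alpha> \<Longrightarrow> T i j \<le> T i 1"
proof (induction j)
  case (Suc j)
  show ?case
  proof (cases "j = 0")
    case False
    then have "(i, j) \<in> diagram \<alpha>" using Suc.prems by (simp add: diagram_def)
    then show ?thesis using Suc.IH row_Suc_le order_trans by blast
  qed simp
qed (simp add: diagram_def)

lemma column_inj:
  assumes "(i, k) \<in> diagram \<alpha>" "(j, k) \<in> diagram \<alpha>" "T i k = T j k"
  shows "i = j"
proof -
  have False if ik: "(i, k) \<in> diagram \<alpha>" and jk: "(j, k) \<in> diagram \<alpha>"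
    and eq: "T i k = T j k" and "i < j" for i j
  proof (cases "k = 1")
    case True
    with that show False
      using strict_mono_onD[OF strict_mono_on_first_column, of i j] by (simp add: diagram_def)
  next
    case False
    then have k: "2 \<le> k" using ik by (simp add: diagram_def)
    have "(i, k - 1) \<in> diagram \<alpha>" using ik k by (auto simp: diagram_def)
    then have left: "T i k \<le> T i (k - 1)" using row_Suc_le[of i "k - 1"] k by simp
    show False
    proof (cases "row_len \<alpha> j \<le> row_len \<alpha> i")
      case True
      then show False using triple_rule_le[OF ik jk \<open>i < j\<close> _ k] eq left by auto
    next
      case False
      then show False using triple_rule_less[OF ik jk \<open>i < j\<close>] eq row_Suc_le[OF jk] by auto
    qed
  qed
  then show ?thesis using assms by (metis linorder_neqE_nat)
qed

lemma inj_on_column: "inj_on (\<lambda>x. T (fst x) (snd x)) {x \<in> diagram \<alpha>. snd x = c}"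
proof (rule inj_onI)
  fix x y assume "x \<in> {x \<in> diagram \<alpha>. snd x = c}" "y \<in> {x \<in> diagram \<alpha>. snd x = c}"
    and "T (fst x) (snd x) = T (fst y) (snd y)"
  then show "x = y" using column_inj[of "fst x" c "fst y"] by (cases x, cases y) simp
qed

end

locale comp_tableau_content = comp_tableau +
  fixes \<gamma> :: "nat list"
  assumes composition: "is_composition \<alpha>" and content: "has_content \<alpha> \<gamma> T"
    and same_parts: "mset \<alpha> = mset \<gamma>"
begin

lemma length_content: "length \<gamma> = length \<alpha>"
  using same_parts by (metis size_mset)

lemma content_conditions:
  "\<forall>(i, j)\<in>diagram \<alpha>. 1 \<le> T i j \<and> T i j \<le> length \<gamma>"
  "\<forall>v. 1 \<le> v \<and> v \<le> length \<gamma> \<longrightarrow> card {c \<in> diagram \<alpha>. T (fst c) (snd c) = v} = \<gamma> ! (v - 1)"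
  using content unfolding has_content_def by simp_all

lemma value_range: "(i, j) \<in> diagram \<alpha> \<Longrightarrow> T i j \<in> {1..length \<alpha>}"
  using content_conditions(1) length_content by auto

lemma card_value_cells:
  "v \<in> {1..length \<alpha>} \<Longrightarrow> card {x \<in> diagram \<alpha>. T (fst x) (snd x) = v} = row_len \<gamma> v"
  using content_conditions(2) length_content by (simp add: row_len_def)

lemma first_column_cell:
  assumes "i \<in> {1..length \<alpha>}"
  shows "(i, 1) \<in> diagram \<alpha>"
proof -
  have "\<alpha> ! (i - 1) \<in> set \<alpha>" using assms by (intro nth_mem) auto
  then have "0 < row_len \<alpha> i" using composition by (simp add: row_len_def is_composition_def)
  then show ?thesis using assms by (simp add: diagram_def)
qed

lemma first_column_eq: "i \<in> {1..length \<alpha>} \<Longrightarrow> T i 1 = i"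
  by (rule strict_mono_on_self_map_eq[OF strict_mono_on_first_column])
    (use value_range first_column_cell in blast)+

lemma le_row_index: "(i, j) \<in> diagram \<alpha> \<Longrightarrow> T i j \<le> i"
  using row_le_first first_column_eq[of i] by (fastforce simp: diagram_def)

lemma card_cells_valued_in:
  assumes "W \<subseteq> {1..length \<alpha>}"
  shows "card {x \<in> diagram \<alpha>. T (fst x) (snd x) \<in> W} = (\<Sum>v\<in>W. row_len \<gamma> v)"
proof -
  let ?E = "{x \<in> diagram \<alpha>. T (fst x) (snd x) \<in> W}"
  have "finite ?E" "finite W" using finite_diagram assms finite_subset by auto
  moreover have "(\<lambda>x. T (fst x) (snd x)) ` ?E \<subseteq> W" by blast
  ultimately have "card ?E = (\<Sum>v\<in>W. card {x \<in> ?E. T (fst x) (snd x) = v})"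
    using sum.group[of ?E W "\<lambda>x. T (fst x) (snd x)" "\<lambda>_. 1::nat"] by simp
  also have "\<dots> = (\<Sum>v\<in>W. row_len \<gamma> v)"
  proof (rule sum.cong[OF refl])
    fix v assume "v \<in> W"
    then have "{x \<in> ?E. T (fst x) (snd x) = v} = {x \<in> diagram \<alpha>. T (fst x) (snd x) = v}" by blast
    also have "card \<dots> = row_len \<gamma> v" using card_value_cells \<open>v \<in> W\<close> assms by blast
    finally show "card {x \<in> ?E. T (fst x) (snd x) = v} = row_len \<gamma> v" .
  qed
  finally show ?thesis .
qed

lemma card_column_long_values_le:
  "card {x \<in> diagram \<alpha>. T (fst x) (snd x) \<in> long_rows \<gamma> c\<^sub>0 \<and> snd x = c}
     \<le> card {x \<in> diagram \<alpha>. fst x \<in> long_rows \<alpha> c\<^sub>0 \<and> snd x = c}"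
  (is "card ?E \<le> card ?F")
proof -
  consider "c = 0" | "1 \<le> c" "c < c\<^sub>0" | "c\<^sub>0 \<le> c" by linarith
  then show ?thesis
  proof cases
    case 1
    then have "?E = {}" by (auto simp: diagram_def)
    then show ?thesis by (simp only: card.empty le0)
  next
    case 2
    have "card ?E \<le> card (long_rows \<gamma> c\<^sub>0)"
      using inj_on_column[of c]
      by (intro card_inj_on_le) (auto simp: long_rows_def intro: inj_on_subset)
    also have "\<dots> = card (long_rows \<alpha> c\<^sub>0)"
      using card_long_rows_eq_if_mset_eq[OF same_parts] by simp
    also have "long_rows \<alpha> c\<^sub>0 = fst ` ?F"
      using 2 by (force simp: diagram_def long_rows_def)
    also have "card \<dots> \<le> card ?F"
      using finite_diagram by (intro card_image_le) simp
    finally show ?thesis .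
  next
    case 3
    then have "?F = {x \<in> diagram \<alpha>. snd x = c}"
      by (auto simp: diagram_def long_rows_def)
    moreover have "?E \<subseteq> {x \<in> diagram \<alpha>. snd x = c}" by blast
    ultimately show ?thesis using finite_diagram by (simp add: card_mono)
  qed
qed

lemma value_in_long_rows:
  assumes cell: "(j, c\<^sub>0) \<in> diagram \<alpha>"
  shows "T j c\<^sub>0 \<in> long_rows \<gamma> c\<^sub>0"
proof -
  define E where "E = {x \<in> diagram \<alpha>. T (fst x) (snd x) \<in> long_rows \<gamma> c\<^sub>0}"
  define F where "F = {x \<in> diagram \<alpha>. fst x \<in> long_rows \<alpha> c\<^sub>0}"
  have finite: "finite E" "finite F"
    unfolding E_def F_def using finite_diagram by simp_all
  have "card E = (\<Sum>v\<in>long_rows \<gamma> c\<^sub>0. row_len \<gamma> v)"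
    unfolding E_def using length_content by (intro card_cells_valued_in) (auto simp: long_rows_def)
  also have "\<dots> = (\<Sum>i\<in>long_rows \<alpha> c\<^sub>0. row_len \<alpha> i)"
    using sum_long_rows_eq_if_mset_eq[OF same_parts, where f = "\<lambda>n. n"] by simp
  also have "\<dots> = card F"
    unfolding F_def by (rule card_diagram_rows[symmetric]) (auto simp: long_rows_def)
  finally have "card E = card F" .
  moreover have "card {x \<in> E. snd x = c} \<le> card {x \<in> F. snd x = c}" for c
    using card_column_long_values_le[of c\<^sub>0 c] by (simp add: E_def F_def conj_assoc)
  ultimately have "card {x \<in> E. snd x = c\<^sub>0} = card {x \<in> F. snd x = c\<^sub>0}"
    using finite by (intro card_fibres_eq_if_card_eq)
  moreover have "{x \<in> F. snd x = c\<^sub>0} = {x \<in> diagram \<alpha>. snd x = c\<^sub>0}"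
    by (auto simp: F_def diagram_def long_rows_def)
  moreover have "{x \<in> E. snd x = c\<^sub>0} \<subseteq> {x \<in> diagram \<alpha>. snd x = c\<^sub>0}" by (auto simp: E_def)
  ultimately have column_in_E: "{x \<in> E. snd x = c\<^sub>0} = {x \<in> diagram \<alpha>. snd x = c\<^sub>0}"
    using finite_diagram by (intro card_subset_eq) simp_all
  have "(j, c\<^sub>0) \<in> {x \<in> diagram \<alpha>. snd x = c\<^sub>0}" using cell by simp
  then have "(j, c\<^sub>0) \<in> E" unfolding column_in_E[symmetric] by simp
  then show ?thesis by (simp add: E_def)
qed

lemma column_values:
  assumes "1 \<le> c"
  shows "(\<lambda>i. T i c) ` long_rows \<alpha> c = long_rows \<gamma> c"
proof (rule card_subset_eq)
  show "finite (long_rows \<gamma> c)" by (simp add: long_rows_def)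
  show "(\<lambda>i. T i c) ` long_rows \<alpha> c \<subseteq> long_rows \<gamma> c"
    using value_in_long_rows mem_long_rows_iff[OF assms] by blast
  have "inj_on (\<lambda>i. T i c) (long_rows \<alpha> c)"
    using column_inj mem_long_rows_iff[OF assms] by (intro inj_onI) blast
  then show "card ((\<lambda>i. T i c) ` long_rows \<alpha> c) = card (long_rows \<gamma> c)"
    using card_long_rows_eq_if_mset_eq[OF same_parts] by (simp add: card_image)
qed

lemma cell_eq_row_index_step:
  assumes cell: "(j, c) \<in> diagram \<alpha>" and "2 \<le> c"
    and left: "\<And>r. (r, c - 1) \<in> diagram \<alpha> \<Longrightarrow> T r (c - 1) = r"
    and above: "\<And>r. r < j \<Longrightarrow> (r, c) \<in> diagram \<alpha> \<Longrightarrow> T r c = r"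
  shows "T j c = j"
proof (rule ccontr)
  define v where "v = T j c"
  assume "T j c \<noteq> j"
  then have "v < j" using le_row_index[OF cell] by (simp add: v_def)
  have "v \<in> long_rows \<gamma> (c - 1)"
    using value_in_long_rows[OF cell] by (auto simp: v_def long_rows_def)
  moreover have "1 \<le> c - 1" using \<open>2 \<le> c\<close> by simp
  ultimately have "v \<in> (\<lambda>i. T i (c - 1)) ` long_rows \<alpha> (c - 1)"
    using column_values by blast
  then obtain r where r: "r \<in> long_rows \<alpha> (c - 1)" "T r (c - 1) = v" by blast
  then have v_left: "(v, c - 1) \<in> diagram \<alpha>" "T v (c - 1) = v"
    using left mem_long_rows_iff[of "c - 1"] \<open>2 \<le> c\<close> by auto
  have j_left: "(j, c - 1) \<in> diagram \<alpha>" using cell \<open>2 \<le> c\<close> by (auto simp: diagram_def)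
  show False
  proof (cases "c \<le> row_len \<alpha> v")
    case True
    then have "(v, c) \<in> diagram \<alpha>" using v_left \<open>2 \<le> c\<close> by (simp add: diagram_def)
    then have "T v c = T j c" using above \<open>v < j\<close> by (simp add: v_def)
    then show False using column_inj \<open>(v, c) \<in> diagram \<alpha>\<close> cell \<open>v < j\<close> by blast
  next
    case False
    then have "row_len \<alpha> v < row_len \<alpha> j" using cell by (simp add: diagram_def)
    then show False
      using triple_rule_less[OF v_left(1) j_left \<open>v < j\<close>] v_left(2) left[OF j_left] \<open>2 \<le> c\<close> \<open>v < j\<close>
      by (simp add: v_def)
  qed
qed

lemma cell_eq_row_index: "(j, c) \<in> diagram \<alpha> \<Longrightarrow> T j c = j"
proof (induction c arbitrary: j rule: less_induct)
  case (less c)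
  note left_columns = less.IH
  show ?case using less.prems
  proof (induction j rule: less_induct)
    case (less j)
    show ?case
    proof (cases "c = 1")
      case True
      then show ?thesis using first_column_eq less.prems by (simp add: diagram_def)
    next
      case False
      then have "2 \<le> c" using less.prems by (simp add: diagram_def)
      then show ?thesis
        by (intro cell_eq_row_index_step[OF less.prems \<open>2 \<le> c\<close>]) (use left_columns less.IH in auto)
    qed
  qed
qed

lemma content_eq_shape: "\<gamma> = \<alpha>"
proof (rule nth_equalityI)
  show "length \<gamma> = length \<alpha>" by (rule length_content)
  fix k assume "k < length \<gamma>"
  then have v: "Suc k \<in> {1..length \<alpha>}" using length_content by simp
  have "{x \<in> diagram \<alpha>. T (fst x) (snd x) = Suc k} = {Suc k} \<times> {1..row_len \<alpha> (Suc k)}"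
    using cell_eq_row_index v by (auto simp: diagram_def)
  then have "row_len \<gamma> (Suc k) = row_len \<alpha> (Suc k)"
    using card_value_cells[OF v] by simp
  then show "\<gamma> ! k = \<alpha> ! k" by (simp add: row_len_def)
qed

end

theorem lemma5p2:
  fixes \<alpha> \<gamma> :: "nat list"
  assumes "is_composition \<alpha>" and "is_composition \<gamma>"
    and "comp_partition \<alpha> = comp_partition \<gamma>"
    and "\<alpha> \<noteq> \<gamma>"
  shows "K_num \<alpha> \<gamma> = 0 \<and> \<not> (\<exists>T. composition_tableau \<alpha> T \<and> has_content \<alpha> \<gamma> T)"
proof -
  have "mset \<alpha> = mset \<gamma>"
    using assms(3) unfolding comp_partition_def by (metis mset_sort rev_rev_ident)
  then have no_tableau: "\<not> (composition_tableau \<alpha> T \<and> has_content \<alpha> \<gamma> T)" for T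
    using comp_tableau_content.content_eq_shape[of \<alpha> T \<gamma>] assms(1,4)
    by (auto simp: comp_tableau_content_def comp_tableau_content_axioms_def comp_tableau_def)
  then have empty: "{T. composition_tableau \<alpha> T \<and> has_content \<alpha> \<gamma> T} = {}" by blast
  show ?thesis unfolding K_num_def empty using no_tableau by simp
qed

end
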